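(* For every positive integer $k$, \[ \mu(1+x+y_1,\,1+x+y_2,\,\ldots,\,1+x+y_k) \;=\; \frac{1}{\pi}\,\mathrm{Ls}_{k+1}\!\left(\frac{\pi}{3}\right) \;-\; \frac{1}{\pi}\,\mathrm{Ls}_{k+1}(\pi), \] where the left-hand side is the multiple Mahler measure of the $k$ polynomials $1+x+y_j$ ($j=1,\dots,k$) in the $k+1$ variables $x,y_1,\ldots,y_k$.
   Context: For functions $P_1,\ldots,P_k$ of $n$ variables, the multiple Mahler measure is \[ \mu(P_1,\ldots,P_k) := \int_0^1\cdots\int_0^1 \prod_{j=1}^k \log\left|P_j\left(e^{2\pi i t_1},\ldots,e^{2\pi i t_n}\right)\right|\,\mathrm{d}t_1\cdots\mathrm{d}t_n . \] For integers $n\ge 1$ and real $\sigma$, the log-sine integral is $\mathrm{Ls}_n(\sigma) := -\int_0^{\sigma}\log^{n-1}\left|2\sin\frac{\theta}{2}\right|\,\mathrm{d}\theta$. *)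

theory Defs
  imports "HOL-Analysis.Analysis"
begin

definition multi_mahler :: "nat \<Rightarrow> ((nat \<Rightarrow> complex) \<Rightarrow> complex) list \<Rightarrow> real" where
  "multi_mahler n Ps =
     (\<integral>t. (\<Prod>P\<leftarrow>Ps. ln (cmod (P (\<lambda>i. exp (2 * of_real pi * \<i> * of_real (t i))))))
        \<partial>(PiM {..<n} (\<lambda>_. restrict_space lborel {0..1::real})))"

definition Ls :: "nat \<Rightarrow> real \<Rightarrow> real" where
  "Ls n \<sigma> = - (LBINT \<theta>=0..\<sigma>. (ln \<bar>2 * sin (\<theta> / 2)\<bar>) ^ (n - 1))"

end

theory Submission
  imports Defs "HOL-Complex_Analysis.Cauchy_Integral_Formula"
begin

text \<open>For fixed x = circ s with |1 + x| \<noteq> 1, Jensen's formula gives that the mean of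
  log |1 + x + circ t| over t is log+ |1 + x| = max 0 (log |1 + x|). As the k factors involve
  distinct variables y_j, Fubini reduces the multiple Mahler measure to the integral of
  (log+ |1 + circ s|)^k over [0, 1]. Since |1 + circ s| = 2 |sin(\<theta>/2)| for \<theta> = 2 pi s - pi, and
  this is at most 1 exactly when |\<theta>| \<le> pi/3, the integral equals 1/pi times the integral of
  (log |2 sin(\<theta>/2)|)^k over [pi/3, pi], which is the stated difference of log-sine integrals.\<close>

definition circ :: "real \<Rightarrow> complex" where
  "circ t = exp (2 * of_real pi * \<i> * of_real t)"

lemma norm_circ [simp]: "norm (circ t) = 1"
  by (simp add: circ_def norm_exp_eq_Re)

lemma circ_neq_zero [simp]: "circ t \<noteq> 0"
  by (simp add: circ_def)

lemma circ_mult_cnj: "circ t * cnj (circ t) = 1"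
  by (metis complex_norm_square norm_circ of_real_1 power_one)

lemma continuous_on_circ [continuous_intros]: "continuous_on A circ"
  unfolding circ_def by (intro continuous_intros)

lemma borel_measurable_circ [measurable]: "circ \<in> borel_measurable borel"
  by (intro borel_measurable_continuous_onI continuous_on_circ)

lemma has_integral_ln_norm_1_plus_circ:
  assumes "norm w < 1"
  shows "((\<lambda>t. ln (norm (1 + w * circ t))) has_integral 0) {0..1}"
proof -
  define f where "f u = Ln (1 + w * u)" for u
  have Re_pos: "Re (1 + w * u) > 0" if "norm u \<le> 1" for u
  proof -
    have "norm (w * u) < 1"
      using assms that by (simp add: norm_mult) (metis mult_left_mono norm_ge_zero mult.right_neutral le_less_trans)
    then have "\<bar>Re (w * u)\<bar> < 1" using abs_Re_le_cmod le_less_trans by blast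
    then show ?thesis by simp
  qed
  have "1 + w * u \<notin> \<real>\<^sub>\<le>\<^sub>0" if "norm u \<le> 1" for u
    using Re_pos[OF that] by (auto simp: complex_nonpos_Reals_iff)
  then have "f holomorphic_on cball 0 1"
    unfolding f_def by (intro holomorphic_intros) auto
  then have "((\<lambda>u. f u / (u - 0)) has_contour_integral (2 * of_real pi * \<i> * f 0)) (circlepath 0 1)"
    by (intro Cauchy_integral_circlepath) (auto intro: holomorphic_on_imp_continuous_on holomorphic_on_subset)
  then have "((\<lambda>t. f (circ t) / circ t * (2 * pi * \<i> * circ t)) has_integral 0) {0..1}"
    unfolding has_contour_integral vector_derivative_circlepath by (simp add: f_def circlepath circ_def)
  then have "((\<lambda>t. (2 * pi * \<i>) * f (circ t)) has_integral 0) {0..1}"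
    by (simp add: field_simps)
  from has_integral_mult_right[where c = "1 / (2 * complex_of_real pi * \<i>)", OF this]
  have "((\<lambda>t. f (circ t)) has_integral 0) {0..1}" by simp
  from has_integral_Re[OF this] have "((\<lambda>t. Re (f (circ t))) has_integral 0) {0..1}"
    by simp
  moreover have "Re (f (circ t)) = ln (norm (1 + w * circ t))" for t
  proof -
    have "Re (1 + w * circ t) > 0"
      by (rule Re_pos) simp
    then have "1 + w * circ t \<noteq> 0"
      by (metis less_irrefl zero_complex.sel(1))
    then show ?thesis by (simp add: f_def)
  qed
  ultimately show ?thesis
    by simp
qed

lemma norm_add_circ_eq: "norm (a + circ t) = norm (1 + cnj a * circ t)"
proof -
  have "a + circ t = circ t * (1 + a * cnj (circ t))"
    using circ_mult_cnj[of t] by (simp add: algebra_simps)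
  then have "norm (a + circ t) = norm (cnj (1 + a * cnj (circ t)))"
    by (simp only: norm_mult norm_circ complex_mod_cnj)
  then show ?thesis by simp
qed

definition ln_pos :: "real \<Rightarrow> real" where
  "ln_pos x = max 0 (ln x)"

lemma has_integral_ln_norm_add_circ:
  assumes "norm a \<noteq> 1"
  shows "((\<lambda>t. ln (norm (a + circ t))) has_integral ln_pos (norm a)) {0..1}"
proof (cases "norm a < 1")
  case True
  then have "ln_pos (norm a) = 0"
    by (cases "a = 0") (auto simp: ln_pos_def)
  with True show ?thesis
    using has_integral_ln_norm_1_plus_circ[of "cnj a"] by (simp add: norm_add_circ_eq)
next
  case False
  with assms have a: "norm a > 1" by simp
  then have inv_a: "norm (inverse a) < 1"
    by (simp add: norm_inverse inverse_less_1_iff)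
  have "ln (norm (a + circ t)) = ln (norm a) + ln (norm (1 + inverse a * circ t))" for t
  proof -
    have "norm (inverse a * circ t) < 1" using inv_a by (simp add: norm_mult)
    then have "1 + inverse a * circ t \<noteq> 0"
      by (metis add.inverse_unique norm_minus_cancel norm_one less_irrefl)
    moreover have "a + circ t = a * (1 + inverse a * circ t)"
      using a by (auto simp: field_simps)
    ultimately show ?thesis
      using a by (simp add: norm_mult ln_mult)
  qed
  moreover have "ln_pos (norm a) = ln (norm a) + 0"
    using a by (simp add: ln_pos_def)
  ultimately show ?thesis
    using has_integral_add[OF has_integral_const_real has_integral_ln_norm_1_plus_circ[OF inv_a]]
    by simp
qed

lemma continuous_on_ln_norm_add_circ:
  assumes "norm a \<noteq> 1"
  shows "continuous_on A (\<lambda>t. ln (norm (a + circ t)))"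
proof -
  have "a + circ t \<noteq> 0" for t
    using assms by (metis add_eq_0_iff norm_circ norm_minus_cancel)
  then show ?thesis by (intro continuous_intros) auto
qed

text \<open>The mean of ln |a + circ t| is nonnegative, so the negative part of the integrand is
  controlled by its positive part.\<close>
lemma integral_abs_ln_norm_add_circ_le:
  assumes "norm a \<noteq> 1" "norm a \<le> 2"
  shows "integral {0..1} (\<lambda>t. \<bar>ln (norm (a + circ t))\<bar>) \<le> 2 * ln 3"
proof -
  define h where "h t = ln (norm (a + circ t))" for t
  have h_int: "(h has_integral ln_pos (norm a)) {0..1}"
    unfolding h_def using has_integral_ln_norm_add_circ[OF assms(1)] .
  have pos_int: "(\<lambda>t. max 0 (h t)) integrable_on {0..1}"
    unfolding h_def
    by (intro integrable_continuous_interval continuous_on_max continuous_on_const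
        continuous_on_ln_norm_add_circ assms)
  have "max 0 (h t) \<le> ln 3" for t
  proof -
    have "norm (a + circ t) \<le> 3"
      using assms(2) norm_triangle_ineq[of a "circ t"] by simp
    then show ?thesis
      by (cases "a + circ t = 0") (auto simp: h_def)
  qed
  then have "integral {0..1} (\<lambda>t. max 0 (h t)) \<le> integral {0..1} (\<lambda>_::real. ln 3)"
    by (intro integral_le pos_int) auto
  then have "integral {0..1} (\<lambda>t. max 0 (h t)) \<le> ln 3"
    by simp
  moreover have "\<bar>h t\<bar> = 2 * max 0 (h t) - h t" for t
    by auto
  then have "integral {0..1} (\<lambda>t. \<bar>h t\<bar>) = 2 * integral {0..1} (\<lambda>t. max 0 (h t)) - ln_pos (norm a)"
    using pos_int h_int by (simp add: integral_diff integral_unique has_integral_integrable)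
  ultimately show ?thesis
    by (simp add: h_def ln_pos_def)
qed

lemma integrable_PiM_prod_kernel:
  fixes M :: "'a measure" and h :: "'a \<Rightarrow> 'a \<Rightarrow> real"
  assumes M: "finite_measure M" and J: "finite J" "i \<notin> J"
    and h: "case_prod h \<in> borel_measurable (M \<Otimes>\<^sub>M M)"
    and bound: "AE s in M. integrable M (h s) \<and> (\<integral>t. \<bar>h s t\<bar> \<partial>M) \<le> C"
  shows "integrable (PiM (insert i J) (\<lambda>_. M)) (\<lambda>t. \<Prod>j\<in>J. h (t i) (t j))"
proof (rule integrableI_bounded)
  interpret finite_measure M by (rule M)
  interpret P: product_sigma_finite "\<lambda>_. M"
    by (simp add: product_sigma_finite_def sigma_finite_measure_axioms)
  let ?F = "\<lambda>t. \<Prod>j\<in>J. h (t i) (t j)"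
  have "(\<lambda>t. h (t i) (t j)) \<in> borel_measurable (PiM I (\<lambda>_. M))" if "i \<in> I" "j \<in> I" for I j
  proof -
    have "(\<lambda>t. (t i, t j)) \<in> measurable (PiM I (\<lambda>_. M)) (M \<Otimes>\<^sub>M M)"
      using that by measurable
    from measurable_comp[OF this h] show ?thesis by (simp add: comp_def)
  qed
  then show F_meas: "?F \<in> borel_measurable (PiM (insert i J) (\<lambda>_. M))"
    by (intro borel_measurable_prod) auto
  have "(\<integral>\<^sup>+ t. norm (?F t) \<partial>PiM (insert i J) (\<lambda>_. M)) =
      (\<integral>\<^sup>+ s. (\<integral>\<^sup>+ x. norm (?F (x(i := s))) \<partial>PiM J (\<lambda>_. M)) \<partial>M)"
    by (rule P.product_nn_integral_insert_rev) (use J F_meas in auto)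
  also have "\<dots> = (\<integral>\<^sup>+ s. (\<Prod>j\<in>J. \<integral>\<^sup>+ t. \<bar>h s t\<bar> \<partial>M) \<partial>M)"
  proof (rule nn_integral_cong)
    fix s assume s: "s \<in> space M"
    have "(\<integral>\<^sup>+ x. norm (?F (x(i := s))) \<partial>PiM J (\<lambda>_. M)) = (\<integral>\<^sup>+ x. (\<Prod>j\<in>J. ennreal \<bar>h s (x j)\<bar>) \<partial>PiM J (\<lambda>_. M))"
    proof (intro nn_integral_cong)
      fix x
      have "?F (x(i := s)) = (\<Prod>j\<in>J. h s (x j))"
        using J(2) by (intro prod.cong) auto
      then show "ennreal (norm (?F (x(i := s)))) = (\<Prod>j\<in>J. ennreal \<bar>h s (x j)\<bar>)"
        by (simp add: prod_norm prod_ennreal abs_prod)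
    qed
    also have "\<dots> = (\<Prod>j\<in>J. \<integral>\<^sup>+ t. \<bar>h s t\<bar> \<partial>M)"
      using J(1) measurable_Pair2[OF h s] by (intro P.product_nn_integral_prod) auto
    finally show "(\<integral>\<^sup>+ x. norm (?F (x(i := s))) \<partial>PiM J (\<lambda>_. M)) = (\<Prod>j\<in>J. \<integral>\<^sup>+ t. \<bar>h s t\<bar> \<partial>M)" .
  qed
  also have "\<dots> \<le> (\<integral>\<^sup>+ s. ennreal C ^ card J \<partial>M)"
    using bound
  proof (intro nn_integral_mono_AE, eventually_elim)
    case (elim s)
    then have "(\<integral>\<^sup>+ t. \<bar>h s t\<bar> \<partial>M) \<le> ennreal C"
      by (simp add: nn_integral_eq_integral ennreal_leI)
    then show ?case
      by (metis prod_constant prod_mono_ennreal)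
  qed
  also have "\<dots> < \<infinity>"
    using emeasure_real[of "space M"] by (auto simp: ennreal_mult_less_top power_less_top_ennreal)
  finally show "(\<integral>\<^sup>+ t. norm (?F t) \<partial>PiM (insert i J) (\<lambda>_. M)) < \<infinity>" .
qed

lemma integral_PiM_prod_kernel:
  fixes M :: "'a measure" and h :: "'a \<Rightarrow> 'a \<Rightarrow> real"
  assumes M: "finite_measure M" and J: "finite J" "i \<notin> J"
    and h: "case_prod h \<in> borel_measurable (M \<Otimes>\<^sub>M M)"
    and bound: "AE s in M. integrable M (h s) \<and> (\<integral>t. \<bar>h s t\<bar> \<partial>M) \<le> C"
  shows "(\<integral>t. (\<Prod>j\<in>J. h (t i) (t j)) \<partial>PiM (insert i J) (\<lambda>_. M)) = (\<integral>s. (\<integral>t. h s t \<partial>M) ^ card J \<partial>M)"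
proof -
  interpret finite_measure M by (rule M)
  interpret P: product_sigma_finite "\<lambda>_. M"
    by (simp add: product_sigma_finite_def sigma_finite_measure_axioms)
  interpret PJ: sigma_finite_measure "PiM J (\<lambda>_. M)"
    using P.sigma_finite J(1) by blast
  let ?F = "\<lambda>t. \<Prod>j\<in>J. h (t i) (t j)"
  define \<phi> where "\<phi> s = (\<integral>y. (\<Prod>j\<in>J. h s (y j)) \<partial>PiM J (\<lambda>_. M))" for s
  have "(\<lambda>(s, y). h s (y j)) \<in> borel_measurable (M \<Otimes>\<^sub>M PiM J (\<lambda>_. M))" if "j \<in> J" for j
  proof -
    have "(\<lambda>(s, y). (s, y j)) \<in> measurable (M \<Otimes>\<^sub>M PiM J (\<lambda>_. M)) (M \<Otimes>\<^sub>M M)"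
      using that by measurable
    from measurable_comp[OF this h] show ?thesis by (simp add: comp_def case_prod_beta)
  qed
  then have "(\<lambda>(s, y). \<Prod>j\<in>J. h s (y j)) \<in> borel_measurable (M \<Otimes>\<^sub>M PiM J (\<lambda>_. M))"
    by (auto intro!: borel_measurable_prod simp: case_prod_beta)
  then have \<phi>_meas: "\<phi> \<in> borel_measurable M"
    unfolding \<phi>_def by (rule PJ.borel_measurable_lebesgue_integral[of "\<lambda>s y. \<Prod>j\<in>J. h s (y j)", simplified])
  have "(\<integral>t. ?F t \<partial>PiM ({i} \<union> J) (\<lambda>_. M)) = (\<integral>x. (\<integral>y. ?F (merge {i} J (x, y)) \<partial>PiM J (\<lambda>_. M)) \<partial>PiM {i} (\<lambda>_. M))"
    using J integrable_PiM_prod_kernel[OF assms] by (intro P.product_integral_fold) auto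
  also have "\<dots> = (\<integral>x. \<phi> (x i) \<partial>PiM {i} (\<lambda>_. M))"
  proof -
    have "?F (merge {i} J (x, y)) = (\<Prod>j\<in>J. h (x i) (y j))" for x y
      using J(2) by (intro prod.cong) (auto simp: merge_def)
    then show ?thesis by (simp add: \<phi>_def)
  qed
  also have "\<dots> = (\<integral>s. \<phi> s \<partial>M)"
    by (rule P.product_integral_singleton[OF \<phi>_meas])
  also have "\<dots> = (\<integral>s. (\<integral>t. h s t \<partial>M) ^ card J \<partial>M)"
  proof (rule integral_cong_AE)
    show "(\<lambda>s. (\<integral>t. h s t \<partial>M) ^ card J) \<in> borel_measurable M"
      using borel_measurable_lebesgue_integral[OF h] by measurable
    show "AE s in M. \<phi> s = (\<integral>t. h s t \<partial>M) ^ card J"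
      using bound
    proof eventually_elim
      case (elim s)
      then have "\<phi> s = (\<Prod>j\<in>J. \<integral>t. h s t \<partial>M)"
        unfolding \<phi>_def using J(1) by (intro P.product_integral_prod) auto
      then show ?case by simp
    qed
  qed (rule \<phi>_meas)
  finally show ?thesis by simp
qed

abbreviation unit_interval :: "real measure" where
  "unit_interval \<equiv> restrict_space lborel {0..1}"

lemma finite_measure_unit_interval: "finite_measure unit_interval"
  by (intro finite_measureI) (simp add: emeasure_restrict_space space_restrict_space)

lemma integral_unit_interval_continuous:
  fixes g :: "real \<Rightarrow> real"
  assumes "continuous_on {0..1} g"
  shows "integrable unit_interval g" "(\<integral>t. g t \<partial>unit_interval) = integral {0..1} g"
proof -
  have g: "integrable lborel (\<lambda>t. indicator {0..1} t *\<^sub>R g t)"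
    using assms by (intro borel_integrable_compact) auto
  then show "integrable unit_interval g"
    by (subst integrable_restrict_space) auto
  have "(\<integral>t. g t \<partial>unit_interval) = (LINT t:{0..1}|lborel. g t)"
    by (subst integral_restrict_space) (auto simp: set_lebesgue_integral_def)
  also have "\<dots> = integral {0..1} g"
    using g by (intro set_borel_integral_eq_integral) (simp add: set_integrable_def)
  finally show "(\<integral>t. g t \<partial>unit_interval) = integral {0..1} g" .
qed

text \<open>If \<bar>1 + z\<bar> = \<bar>z\<bar> = 1 then z is a primitive cube root of unity, so this happens only at
  countably many s.\<close>
lemma AE_norm_1_plus_circ_neq_1: "AE s in unit_interval. norm (1 + circ s) \<noteq> 1"
proof -
  have "{s. norm (1 + circ s) = 1} \<subseteq> range (\<lambda>n::int. of_int n / 3)"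
  proof
    fix s assume "s \<in> {s. norm (1 + circ s) = 1}"
    then have "(1 + circ s) * (1 + cnj (circ s)) = 1"
      using complex_norm_square[of "1 + circ s"] by simp
    then have "circ s ^ 3 = 1"
      using circ_mult_cnj[of s] by algebra
    then have "exp (complex_of_real (6 * pi * s) * \<i>) = 1"
      by (simp add: circ_def exp_of_nat_mult[symmetric] algebra_simps)
    then obtain n :: int where "6 * pi * s = of_int (2 * n) * pi"
      by (auto simp: exp_eq_1)
    then show "s \<in> range (\<lambda>n::int. of_int n / 3)"
      by (auto simp: field_simps intro!: image_eqI[of _ _ n])
  qed
  moreover have "{s. norm (1 + circ s) = 1} \<in> sets lborel"
    by measurable
  ultimately have "{s. norm (1 + circ s) = 1} \<in> null_sets lborel"
    by (intro null_sets_subset[OF countable_imp_null_set_lborel]) auto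
  then have "AE s in lborel. norm (1 + circ s) \<noteq> 1"
    by (rule AE_not_in[THEN AE_mp]) auto
  then show ?thesis
    by (subst AE_restrict_space_iff) (auto elim: AE_mp)
qed

lemma ln_pos_eq_ln_max_1: "0 \<le> x \<Longrightarrow> ln_pos x = ln (max 1 x)"
  by (cases "x = 0"; cases "x \<le> 1") (auto simp: ln_pos_def max_def)

lemma continuous_on_ln_pos_norm_1_plus_circ_pow:
  "continuous_on A (\<lambda>s. ln_pos (norm (1 + circ s)) ^ k)"
  by (simp add: ln_pos_eq_ln_max_1) (intro continuous_intros, auto)

lemma integral_PiM_prod_ln_norm_1_plus_circ:
  assumes J: "finite J" "i \<notin> J"
  shows "(\<integral>t. (\<Prod>j\<in>J. ln (norm (1 + circ (t i) + circ (t j)))) \<partial>PiM (insert i J) (\<lambda>_. unit_interval))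
     = integral {0..1} (\<lambda>s. ln_pos (norm (1 + circ s)) ^ card J)"
proof -
  define h where "h s t = ln (norm (1 + circ s + circ t))" for s t
  have "(\<lambda>x. x) \<in> measurable unit_interval borel"
    by (intro measurable_restrict_space1) simp
  then have [measurable]: "fst \<in> measurable (unit_interval \<Otimes>\<^sub>M unit_interval) borel"
    "snd \<in> measurable (unit_interval \<Otimes>\<^sub>M unit_interval) borel"
    using measurable_compose[OF measurable_fst] measurable_compose[OF measurable_snd] by blast+
  have h_meas: "case_prod h \<in> borel_measurable (unit_interval \<Otimes>\<^sub>M unit_interval)"
    unfolding h_def case_prod_beta' by measurable
  have mean: "integrable unit_interval (h s) \<and> (\<integral>t. h s t \<partial>unit_interval) = ln_pos (norm (1 + circ s)) \<and>
      (\<integral>t. \<bar>h s t\<bar> \<partial>unit_interval) \<le> 2 * ln 3" if s: "norm (1 + circ s) \<noteq> 1" for s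
  proof -
    have c: "continuous_on {0..1} (h s)"
      unfolding h_def using s by (rule continuous_on_ln_norm_add_circ)
    have "integral {0..1} (h s) = ln_pos (norm (1 + circ s))"
      unfolding h_def using has_integral_ln_norm_add_circ[OF s] by (rule integral_unique)
    moreover have "integral {0..1} (\<lambda>t. \<bar>h s t\<bar>) \<le> 2 * ln 3"
      unfolding h_def using s norm_triangle_ineq[of 1 "circ s"]
      by (intro integral_abs_ln_norm_add_circ_le) auto
    ultimately show ?thesis
      using integral_unit_interval_continuous[OF c]
        integral_unit_interval_continuous[OF continuous_on_rabs[OF c]] by simp
  qed
  have "(\<integral>t. (\<Prod>j\<in>J. h (t i) (t j)) \<partial>PiM (insert i J) (\<lambda>_. unit_interval))
      = (\<integral>s. (\<integral>t. h s t \<partial>unit_interval) ^ card J \<partial>unit_interval)"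
    using mean AE_norm_1_plus_circ_neq_1
    by (intro integral_PiM_prod_kernel finite_measure_unit_interval J h_meas) (auto elim!: AE_mp)
  also have "\<dots> = (\<integral>s. ln_pos (norm (1 + circ s)) ^ card J \<partial>unit_interval)"
  proof (intro integral_cong_AE)
    have "(\<lambda>s. \<integral>t. h s t \<partial>unit_interval) \<in> borel_measurable unit_interval"
      using finite_measure_unit_interval h_meas
      by (intro sigma_finite_measure.borel_measurable_lebesgue_integral) (auto simp: finite_measure_def)
    then show "(\<lambda>s. (\<integral>t. h s t \<partial>unit_interval) ^ card J) \<in> borel_measurable unit_interval"
      by measurable
  qed (use mean AE_norm_1_plus_circ_neq_1
      integral_unit_interval_continuous(1)[OF continuous_on_ln_pos_norm_1_plus_circ_pow]
      in \<open>auto elim!: AE_mp\<close>)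
  also have "\<dots> = integral {0..1} (\<lambda>s. ln_pos (norm (1 + circ s)) ^ card J)"
    by (intro integral_unit_interval_continuous continuous_on_ln_pos_norm_1_plus_circ_pow)
  finally show ?thesis
    by (simp add: h_def)
qed

lemma norm_1_plus_circ: "norm (1 + circ s) = 2 * \<bar>sin ((2 * pi * s - pi) / 2)\<bar>"
proof -
  have "\<i> * of_real (2 * pi * s - pi) = 2 * of_real pi * \<i> * of_real s - \<i> * of_real pi"
    by (simp add: algebra_simps)
  then have "1 + circ s = - (exp (\<i> * of_real (2 * pi * s - pi)) - 1)"
    by (simp add: circ_def exp_diff)
  then show ?thesis
    by (simp only: norm_minus_cancel dist_exp_i_1)
qed

lemma integral_ln_pos_norm_1_plus_circ_pow:
  assumes "k \<ge> 1"
  shows "integral {0..1} (\<lambda>s. ln_pos (norm (1 + circ s)) ^ k)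
       = integral {pi/3..pi} (\<lambda>t. (ln \<bar>2 * sin (t/2)\<bar>) ^ k) / pi"
proof -
  define H where "H t = ln_pos (2 * \<bar>sin (t/2)\<bar>) ^ k" for t
  have H_cont: "continuous_on A H" for A
    unfolding H_def by (simp add: ln_pos_eq_ln_max_1) (intro continuous_intros, auto)
  have H_even: "H (- t) = H t" for t
    by (simp add: H_def)
  have H_int: "H integrable_on cbox a b" for a b
    using H_cont by (intro integrable_continuous)
  have "((\<lambda>s. H (2 * pi * s + - pi)) has_integral integral {-pi..pi} H / (2 * pi)) {0..1}"
    using has_integral_affinity'[OF integrable_integral[OF H_int[of "-pi" pi]], of "2 * pi" "- pi"]
    by (simp add: field_simps)
  then have "integral {0..1} (\<lambda>s. ln_pos (norm (1 + circ s)) ^ k) = integral {-pi..pi} H / (2 * pi)"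
    by (simp add: H_def norm_1_plus_circ integral_unique)
  also have "integral {-pi..pi} H = integral {-pi..0} H + integral {0..pi} H"
    using Henstock_Kurzweil_Integration.integral_combine[of "-pi" 0 pi H] H_int by simp
  also have "integral {-pi..0} H = integral {0..pi} H"
    using Henstock_Kurzweil_Integration.integral_reflect_real[of pi 0 H] by (simp add: H_even)
  also have "integral {0..pi} H = integral {0..pi/3} H + integral {pi/3..pi} H"
    using Henstock_Kurzweil_Integration.integral_combine[of 0 "pi/3" pi H] H_int by simp
  also have "integral {0..pi/3} H = 0"
  proof -
    have "2 * \<bar>sin (t/2)\<bar> \<le> 1" if "t \<in> {0..pi/3}" for t
    proof -
      have "sin (t/2) \<le> sin (pi/6)" "0 \<le> sin (t/2)"
        using that by (auto intro!: sin_monotone_2pi_le sin_ge_zero)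
      then show ?thesis by (simp add: sin_30)
    qed
    then have "H t = 0" if "t \<in> {0..pi/3}" for t
      using that assms by (simp add: H_def ln_pos_eq_ln_max_1 max_absorb1)
    then show ?thesis
      using Henstock_Kurzweil_Integration.integral_cong[of "{0..pi/3}" H "\<lambda>_. 0"] by simp
  qed
  also have "integral {pi/3..pi} H = integral {pi/3..pi} (\<lambda>t. (ln \<bar>2 * sin (t/2)\<bar>) ^ k)"
  proof (intro integral_cong)
    fix t assume "t \<in> {pi/3..pi}"
    then have "sin (pi/6) \<le> sin (t/2)"
      by (intro sin_monotone_2pi_le) auto
    then show "H t = (ln \<bar>2 * sin (t/2)\<bar>) ^ k"
      by (simp add: H_def ln_pos_eq_ln_max_1 max_def sin_30 abs_mult)
  qed
  finally show ?thesis
    by (simp add: field_simps)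
qed

lemma ln_pow_le_sqrt:
  fixes x :: real
  assumes "1 \<le> x"
  shows "ln x ^ k \<le> (2 * real k) ^ k * sqrt x"
proof (cases "k = 0")
  case True
  with assms show ?thesis by simp
next
  case False
  have "ln x \<le> 2 * real k * x powr (1 / (2 * real k))"
    using ln_powr_bound[OF assms, of "1 / (2 * real k)"] False by (simp add: mult.commute)
  then have "ln x ^ k \<le> (2 * real k * x powr (1 / (2 * real k))) ^ k"
    using assms by (intro power_mono) auto
  also have "\<dots> = (2 * real k) ^ k * x powr (1 / 2)"
    using False assms by (simp add: power_mult_distrib powr_power)
  finally show ?thesis
    using assms by (simp add: powr_half_sqrt)
qed

lemma sin_ge_half_self:
  fixes x :: real
  assumes "0 \<le> x" "x \<le> pi/3"
  shows "x / 2 \<le> sin x"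
proof -
  have "sin 0 - 0 / 2 \<le> sin x - x / 2"
  proof (rule DERIV_nonneg_imp_nondecreasing[OF assms(1)])
    fix y assume "0 \<le> y" "y \<le> x"
    then have "cos (pi/3) \<le> cos y"
      using assms by (intro cos_monotone_0_pi_le) auto
    then show "\<exists>d. ((\<lambda>y. sin y - y / 2) has_real_derivative d) (at y) \<and> 0 \<le> d"
      by (auto intro!: derivative_eq_intros simp: cos_60)
  qed
  then show ?thesis by simp
qed

lemma abs_ln_abs_2_sin_half_le:
  assumes "0 < t" "t \<le> pi/3"
  shows "\<bar>ln \<bar>2 * sin (t/2)\<bar>\<bar> \<le> ln (2/t)"
proof -
  have lower: "t/2 \<le> 2 * sin (t/2)"
    using sin_ge_half_self[of "t/2"] assms by simp
  have "sin (t/2) \<le> sin (pi/6)"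
    using assms by (intro sin_monotone_2pi_le) auto
  then have "\<bar>ln \<bar>2 * sin (t/2)\<bar>\<bar> = - ln (2 * sin (t/2))"
    using lower assms by (simp add: sin_30)
  also have "\<dots> \<le> - ln (t/2)"
    using lower assms by simp
  also have "\<dots> = ln (2/t)"
    using assms by (simp add: ln_div)
  finally show ?thesis .
qed

lemma continuous_on_ln_abs_2_sin_half_pow:
  "continuous_on {pi/3..pi} (\<lambda>t. (ln \<bar>2 * sin (t/2)\<bar>) ^ k)"
proof -
  have "\<bar>2 * sin (t/2)\<bar> \<noteq> 0" if "t \<in> {pi/3..pi}" for t
  proof -
    from that have "pi/3 \<le> t" "t \<le> pi" by auto
    then have "0 < t/2" "t/2 < pi"
      using pi_gt_zero by linarith+
    then show ?thesis using sin_gt_zero by fastforce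
  qed
  then show ?thesis
    by (intro continuous_intros) auto
qed

lemma set_integrable_ln_abs_2_sin_half_pow:
  "set_integrable lborel {0<..pi} (\<lambda>t. (ln \<bar>2 * sin (t/2)\<bar>) ^ k)"
proof -
  let ?L = "\<lambda>t::real. (ln \<bar>2 * sin (t/2)\<bar>) ^ k"
  let ?C = "(2 * real k) ^ k * sqrt 2"
  have "(\<lambda>t::real. t powr (-1/2)) absolutely_integrable_on {0<..pi/3}"
    by (intro nonnegative_absolutely_integrable_1 integrable_on_powr_from_0') auto
  then have "integrable lborel (\<lambda>t. ?C * (indicator {0<..pi/3} t *\<^sub>R t powr (-1/2)))"
    by (intro integrable_mult_right) (simp add: set_integrable_def integrable_completion)
  then have "set_integrable lborel {0<..pi/3} ?L"
    unfolding set_integrable_def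
  proof (rule Bochner_Integration.integrable_bound)
    show "AE t in lborel. norm (indicator {0<..pi/3} t *\<^sub>R ?L t) \<le> norm (?C * (indicator {0<..pi/3} t *\<^sub>R t powr (-1/2)))"
    proof (intro AE_I2)
      fix t :: real
      show "norm (indicator {0<..pi/3} t *\<^sub>R ?L t) \<le> norm (?C * (indicator {0<..pi/3} t *\<^sub>R t powr (-1/2)))"
      proof (cases "t \<in> {0<..pi/3}")
        case True
        then have "\<bar>?L t\<bar> \<le> ln (2/t) ^ k"
          using abs_ln_abs_2_sin_half_le[of t] by (auto simp: power_abs intro!: power_mono)
        also have "\<dots> \<le> (2 * real k) ^ k * sqrt (2/t)"
          using True pi_less_4 by (intro ln_pow_le_sqrt) (auto simp: field_simps)
        also have "sqrt (2/t) = sqrt 2 * t powr (-1/2)"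
          using True by (simp add: real_sqrt_divide powr_minus_divide powr_half_sqrt)
        finally show ?thesis
          using True by (simp add: abs_mult mult.assoc)
      qed simp
    qed
  qed measurable
  moreover have "set_integrable lborel {pi/3..pi} ?L"
    unfolding set_integrable_def
    by (intro borel_integrable_compact compact_Icc continuous_on_ln_abs_2_sin_half_pow)
  ultimately have "set_integrable lborel ({0<..pi/3} \<union> {pi/3..pi}) ?L"
    by (intro set_integrable_Un) auto
  moreover have "{0<..pi/3} \<union> {pi/3..pi} = {0<..pi}"
    using pi_gt_zero by (auto simp del: pi_gt_zero)
  ultimately show ?thesis by simp
qed

lemma Ls_diff_eq_integral:
  "Ls (k + 1) (pi/3) - Ls (k + 1) pi = integral {pi/3..pi} (\<lambda>t. (ln \<bar>2 * sin (t/2)\<bar>) ^ k)"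
proof -
  let ?L = "\<lambda>t::real. (ln \<bar>2 * sin (t/2)\<bar>) ^ k"
  have "set_integrable lborel {0<..<pi} ?L"
    by (rule set_integrable_subset[OF set_integrable_ln_abs_2_sin_half_pow]) auto
  then have "(LBINT t=0..pi/3. ?L t) + (LBINT t=pi/3..pi. ?L t) = (LBINT t=0..pi. ?L t)"
    by (intro interval_integral_sum)
      (simp add: interval_lebesgue_integrable_def zero_ereal_def einterval_eq min_def max_def)
  moreover have "set_integrable lborel {pi/3..pi} ?L"
    using pi_gt_zero
    by (intro set_integrable_subset[OF set_integrable_ln_abs_2_sin_half_pow]) (auto simp del: pi_gt_zero)
  then have "(LBINT t=pi/3..pi. ?L t) = integral {pi/3..pi} ?L"
    by (intro interval_integral_eq_integral) auto
  ultimately show ?thesis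
    by (simp add: Ls_def)
qed

theorem theorem2p1:
  fixes k :: nat
  assumes "k \<ge> 1"
  shows "multi_mahler (k + 1) (map (\<lambda>j. (\<lambda>z. 1 + z 0 + z j)) [1..<k+1])
         = Ls (k + 1) (pi / 3) / pi - Ls (k + 1) pi / pi"
proof -
  let ?J = "set [1..<k+1]"
  have "{..<k+1} = insert 0 ?J" by auto
  moreover have "(\<Prod>P\<leftarrow>map (\<lambda>j. (\<lambda>z. 1 + z 0 + z j)) [1..<k+1]. ln (norm (P (\<lambda>i. exp (2 * of_real pi * \<i> * of_real (t i))))))
      = (\<Prod>j\<in>?J. ln (norm (1 + circ (t 0) + circ (t j))))" for t :: "nat \<Rightarrow> real"
    by (simp only: map_map comp_def circ_def prod.distinct_set_conv_list[OF distinct_upt])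
  ultimately have "multi_mahler (k + 1) (map (\<lambda>j. (\<lambda>z. 1 + z 0 + z j)) [1..<k+1])
      = (\<integral>t. (\<Prod>j\<in>?J. ln (norm (1 + circ (t 0) + circ (t j)))) \<partial>PiM (insert 0 ?J) (\<lambda>_. unit_interval))"
    by (simp add: multi_mahler_def)
  also have "\<dots> = integral {0..1} (\<lambda>s. ln_pos (norm (1 + circ s)) ^ card ?J)"
    by (intro integral_PiM_prod_ln_norm_1_plus_circ) auto
  also have "card ?J = k"
    by (simp only: distinct_card[OF distinct_upt] length_upt diff_add_inverse2)
  also have "integral {0..1} (\<lambda>s. ln_pos (norm (1 + circ s)) ^ k)
      = integral {pi/3..pi} (\<lambda>t. (ln \<bar>2 * sin (t/2)\<bar>) ^ k) / pi"
    using assms by (rule integral_ln_pos_norm_1_plus_circ_pow)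
  also have "\<dots> = Ls (k + 1) (pi / 3) / pi - Ls (k + 1) pi / pi"
    by (simp only: Ls_diff_eq_integral diff_divide_distrib[symmetric])
  finally show ?thesis .
qed

end
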